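(* For $N>0$ let $\mathcal{R}_N=\{(x,y)\in\mathbb{R}^2:|A(x,y)|\le(N/4)^{1/3},\ |B(x,y)|\le(N/27)^{1/2}\}$ and $V=\mathrm{Vol}(\mathcal{R}_1)$. Then $\mathcal{R}_N=\{(N^{\frac{\tau}{6\varsigma}}x,N^{\frac{1}{6\varsigma}}y):(x,y)\in\mathcal{R}_1\}$, $\mathcal{R}_1$ is bounded, and $\mathrm{Vol}(\mathcal{R}_N)=N^{\frac{\tau+1}{6\varsigma}}V$. In particular every $(x,y)\in\mathcal{R}_N$ satisfies $x\ll N^{\frac{\tau}{6\varsigma}}$ and $y\ll N^{\frac{1}{6\varsigma}}$, with implied constants depending only on $\mathcal{R}_1$.
   Context: Fix $\upsilon\in\{1,2\}$ and positive integers $m,\tau$ with $m=1$ or $\upsilon\tau=1$. Let $f,g\in\mathbb{Z}[t]$ with $4f^3+27g^2\ne0$, no common real root, and $\max\{\frac12\deg f,\frac13\deg g\}=\frac{2m}{\upsilon\tau}$. Let $\varsigma=2m$ if $\upsilon=1$, $\varsigma=1$ if $\upsilon=2$; $A(x,y)=y^{2\varsigma}f(x/y^\tau)$, $B(x,y)=y^{3\varsigma}g(x/y^\tau)\in\mathbb{Z}[x,y]$. *)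

theory Defs
  imports "HOL-Analysis.Analysis" "HOL-Computational_Algebra.Polynomial"
begin

definition varsigma :: "nat \<Rightarrow> nat \<Rightarrow> nat" where
  "varsigma \<upsilon> m = (if \<upsilon> = 1 then 2 * m else 1)"

text \<open>The weighted homogenisation y^d f(x / y^tau), as the polynomial in x, y
  (sum of coeff_i x^i y^(d - tau i)); under the hypotheses tau * deg f <= d.\<close>
definition homog :: "int poly \<Rightarrow> nat \<Rightarrow> nat \<Rightarrow> real \<Rightarrow> real \<Rightarrow> real" where
  "homog p d \<tau> x y = (\<Sum>i\<le>degree p. of_int (coeff p i) * x ^ i * y ^ (d - \<tau> * i))"

definition formA :: "int poly \<Rightarrow> nat \<Rightarrow> nat \<Rightarrow> nat \<Rightarrow> real \<Rightarrow> real \<Rightarrow> real" where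
  "formA f \<upsilon> m \<tau> x y = homog f (2 * varsigma \<upsilon> m) \<tau> x y"

definition formB :: "int poly \<Rightarrow> nat \<Rightarrow> nat \<Rightarrow> nat \<Rightarrow> real \<Rightarrow> real \<Rightarrow> real" where
  "formB g \<upsilon> m \<tau> x y = homog g (3 * varsigma \<upsilon> m) \<tau> x y"

definition regionR :: "int poly \<Rightarrow> int poly \<Rightarrow> nat \<Rightarrow> nat \<Rightarrow> nat \<Rightarrow> real \<Rightarrow> (real \<times> real) set" where
  "regionR f g \<upsilon> m \<tau> N = {(x, y). \<bar>formA f \<upsilon> m \<tau> x y\<bar> \<le> (N / 4) powr (1/3)
                                  \<and> \<bar>formB g \<upsilon> m \<tau> x y\<bar> \<le> (N / 27) powr (1/2)}"

end

theory Submission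
  imports Defs
begin

text \<open>The forms are weighted homogeneous: A(l^\<tau> x, l y) = l^(2\<varsigma>) A(x, y) and
  B(l^\<tau> x, l y) = l^(3\<varsigma>) B(x, y). For l = N^(1/(6\<varsigma>)) these factors are N^(1/3) and N^(1/2),
  which turns the inequalities defining R_1 into those defining R_N; so R_N is the image of R_1
  under a diagonal linear map, whose determinant gives the volume.
  Since f and g have no common real root and one of them has full weighted degree, A and B vanish
  simultaneously only at the origin. Hence |A| + |B| has a positive minimum c on the compact curve
  max |u| |v| = 1. Every other point of R_1 is (l^\<tau> u, l v) with (u, v) on that curve and l > 0,
  and homogeneity gives c \<le> 2 / l as soon as l \<ge> 1, which bounds l.\<close>

lemma homog_scale:
  assumes "\<tau> * degree p \<le> d"
  shows "homog p d \<tau> (l ^ \<tau> * x) (l * y) = l ^ d * homog p d \<tau> x y"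
  unfolding homog_def sum_distrib_left
proof (rule sum.cong[OF refl])
  fix i assume "i \<in> {..degree p}"
  then have "\<tau> * i \<le> d" using assms by (meson atMost_iff dual_order.trans mult_le_mono2)
  then have "l ^ d = l ^ (\<tau> * i) * l ^ (d - \<tau> * i)" by (simp flip: power_add)
  then show "of_int (coeff p i) * (l ^ \<tau> * x) ^ i * (l * y) ^ (d - \<tau> * i) =
      l ^ d * (of_int (coeff p i) * x ^ i * y ^ (d - \<tau> * i))"
    by (simp add: power_mult algebra_simps)
qed

lemma homog_eq_poly:
  assumes "\<tau> * degree p \<le> d" "y \<noteq> 0"
  shows "homog p d \<tau> x y = y ^ d * poly (map_poly of_int p) (x / y ^ \<tau>)"
proof -
  have "homog p d \<tau> x y = y ^ d * homog p d \<tau> (x / y ^ \<tau>) 1"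
    using homog_scale[OF assms(1), of y "x / y ^ \<tau>" 1] assms(2) by simp
  also have "homog p d \<tau> (x / y ^ \<tau>) 1 = poly (map_poly of_int p) (x / y ^ \<tau>)"
    by (simp add: homog_def poly_altdef coeff_map_poly degree_map_poly)
  finally show ?thesis .
qed

lemma homog_y_zero:
  assumes "\<tau> * degree p = d" "\<tau> > 0"
  shows "homog p d \<tau> x 0 = of_int (lead_coeff p) * x ^ degree p"
proof -
  have "homog p d \<tau> x 0 = (\<Sum>i\<in>{degree p}. of_int (coeff p i) * x ^ i * 0 ^ (d - \<tau> * i))"
    unfolding homog_def
  proof (rule sum.mono_neutral_right)
    show "\<forall>i\<in>{..degree p} - {degree p}. of_int (coeff p i) * x ^ i * 0 ^ (d - \<tau> * i) = (0::real)"
      using assms by auto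
  qed auto
  then show ?thesis using assms by simp
qed

lemma continuous_on_homog: "continuous_on UNIV (\<lambda>(x, y). homog p d \<tau> x y)"
  unfolding homog_def case_prod_beta by (intro continuous_intros)

lemma homog_common_zero:
  assumes "\<tau> > 0" "d > 0" "e > 0"
    and "\<tau> * degree p \<le> d" "\<tau> * degree q \<le> e"
    and "\<tau> * degree p = d \<or> \<tau> * degree q = e"
    and "\<not> (\<exists>t. poly (map_poly of_int p) t = 0 \<and> poly (map_poly of_int q) t = (0::real))"
    and "homog p d \<tau> x y = 0" "homog q e \<tau> x y = 0"
  shows "x = 0 \<and> y = 0"
proof (cases "y = 0")
  case False
  then show ?thesis using assms(7-9) homog_eq_poly[OF assms(4) False] homog_eq_poly[OF assms(5) False]
    by auto
next
  case True
  from assms(6) show ?thesis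
  proof
    assume full: "\<tau> * degree p = d"
    then have "p \<noteq> 0" using assms(2) by auto
    then show ?thesis using assms(8) homog_y_zero[OF full assms(1)] True by simp
  next
    assume full: "\<tau> * degree q = e"
    then have "q \<noteq> 0" using assms(3) by auto
    then show ?thesis using assms(9) homog_y_zero[OF full assms(1)] True by simp
  qed
qed

definition unit_sup_sphere :: "(real \<times> real) set" where
  "unit_sup_sphere = {(u, v). max \<bar>u\<bar> \<bar>v\<bar> = 1}"

lemma compact_unit_sup_sphere: "compact unit_sup_sphere"
proof -
  have "closed unit_sup_sphere"
    unfolding unit_sup_sphere_def case_prod_beta by (intro closed_Collect_eq continuous_intros)
  moreover have "unit_sup_sphere \<subseteq> cbox (-1, -1) (1, 1)"
    by (auto simp: unit_sup_sphere_def cbox_Pair_eq max_def split: if_splits)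
  ultimately show ?thesis by (meson bounded_cbox bounded_subset compact_eq_bounded_closed)
qed

lemma weighted_polar_decomposition:
  fixes x y :: real
  assumes "\<tau> > 0" "(x, y) \<noteq> (0, 0)"
  obtains l u v where "l > 0" "x = l ^ \<tau> * u" "y = l * v" "(u, v) \<in> unit_sup_sphere"
proof -
  define l where "l = max (root \<tau> \<bar>x\<bar>) \<bar>y\<bar>"
  have "l > 0" using assms unfolding l_def by (auto simp: max_def)
  then have "max \<bar>x / l ^ \<tau>\<bar> \<bar>y / l\<bar> = max (\<bar>x\<bar> / l ^ \<tau>) (\<bar>y\<bar> / l)"
    by simp
  also have "\<bar>x\<bar> / l ^ \<tau> = (root \<tau> \<bar>x\<bar> / l) ^ \<tau>"
    using assms(1) by (simp add: power_divide)
  also have "max ((root \<tau> \<bar>x\<bar> / l) ^ \<tau>) (\<bar>y\<bar> / l) = 1"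
  proof -
    have "root \<tau> \<bar>x\<bar> / l \<le> 1" "\<bar>y\<bar> / l \<le> 1" "root \<tau> \<bar>x\<bar> / l = 1 \<or> \<bar>y\<bar> / l = 1"
      using \<open>l > 0\<close> unfolding l_def by (auto simp: max_def)
    moreover have "(root \<tau> \<bar>x\<bar> / l) ^ \<tau> \<le> 1"
      using \<open>root \<tau> \<bar>x\<bar> / l \<le> 1\<close> \<open>l > 0\<close> by (intro power_le_one) (auto simp: real_root_ge_zero)
    ultimately show ?thesis by (auto simp: max_def)
  qed
  finally have "(x / l ^ \<tau>, y / l) \<in> unit_sup_sphere" by (simp add: unit_sup_sphere_def)
  then show ?thesis using that[of l "x / l ^ \<tau>" "y / l"] \<open>l > 0\<close> by simp
qed

lemma unit_sup_sphere_sum_abs_lower_bound: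
  fixes F G :: "real \<Rightarrow> real \<Rightarrow> real"
  assumes F_cont: "continuous_on UNIV (\<lambda>(x, y). F x y)"
    and G_cont: "continuous_on UNIV (\<lambda>(x, y). G x y)"
    and common_zero: "\<And>x y. F x y = 0 \<Longrightarrow> G x y = 0 \<Longrightarrow> x = 0 \<and> y = 0"
  obtains c where "c > 0" "\<And>u v. (u, v) \<in> unit_sup_sphere \<Longrightarrow> c \<le> \<bar>F u v\<bar> + \<bar>G u v\<bar>"
proof -
  define h where "h p = \<bar>F (fst p) (snd p)\<bar> + \<bar>G (fst p) (snd p)\<bar>" for p
  have "continuous_on UNIV h"
    using F_cont G_cont unfolding h_def case_prod_beta' by (intro continuous_intros)
  then have "continuous_on unit_sup_sphere h" by (rule continuous_on_subset) simp
  moreover have "(1, 1) \<in> unit_sup_sphere" by (simp add: unit_sup_sphere_def)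
  ultimately obtain p0 where p0: "p0 \<in> unit_sup_sphere" "\<And>p. p \<in> unit_sup_sphere \<Longrightarrow> h p0 \<le> h p"
    using continuous_attains_inf[OF compact_unit_sup_sphere] by blast
  have "h p0 \<noteq> 0"
  proof
    assume "h p0 = 0"
    then have "F (fst p0) (snd p0) = 0" "G (fst p0) (snd p0) = 0"
      by (simp_all add: h_def add_nonneg_eq_0_iff)
    then have "fst p0 = 0 \<and> snd p0 = 0" by (rule common_zero)
    then show False using p0(1) by (cases p0) (simp add: unit_sup_sphere_def)
  qed
  moreover have "h p0 \<ge> 0" by (simp add: h_def)
  ultimately have "h p0 > 0" by simp
  then show ?thesis using that p0(2) by (force simp: h_def)
qed

lemma bounded_weighted_homogeneous_sublevel:
  fixes F G :: "real \<Rightarrow> real \<Rightarrow> real" and \<tau> a b :: nat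
  assumes "\<tau> > 0" "a > 0" "b > 0"
    and F_hom: "\<And>l x y. F (l ^ \<tau> * x) (l * y) = l ^ a * F x y"
    and G_hom: "\<And>l x y. G (l ^ \<tau> * x) (l * y) = l ^ b * G x y"
    and "continuous_on UNIV (\<lambda>(x, y). F x y)" "continuous_on UNIV (\<lambda>(x, y). G x y)"
    and "\<And>x y. F x y = 0 \<Longrightarrow> G x y = 0 \<Longrightarrow> x = 0 \<and> y = 0"
  shows "bounded {(x, y). \<bar>F x y\<bar> \<le> 1 \<and> \<bar>G x y\<bar> \<le> 1}"
proof -
  obtain c where "c > 0" and c: "\<And>u v. (u, v) \<in> unit_sup_sphere \<Longrightarrow> c \<le> \<bar>F u v\<bar> + \<bar>G u v\<bar>"
    using unit_sup_sphere_sum_abs_lower_bound[OF assms(6-8)] by blast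
  define L where "L = max 1 (2 / c)"
  have sublevel_in_box: "x \<in> {- (L ^ \<tau>)..L ^ \<tau>} \<and> y \<in> {- L..L}" if "\<bar>F x y\<bar> \<le> 1" "\<bar>G x y\<bar> \<le> 1" for x y
  proof (cases "(x, y) = (0, 0)")
    case False
    with \<open>\<tau> > 0\<close> obtain l u v where
      l: "l > 0" "x = l ^ \<tau> * u" "y = l * v" and uv: "(u, v) \<in> unit_sup_sphere"
      by (rule weighted_polar_decomposition)
    have "l \<le> L"
    proof (rule ccontr)
      assume "\<not> l \<le> L"
      then have "l > 1" "2 / c < l" by (auto simp: L_def)
      then have "c * l > 2" using \<open>c > 0\<close> by (simp add: divide_less_eq mult.commute)
      have "c \<le> \<bar>F u v\<bar> + \<bar>G u v\<bar>" using c[OF uv] .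
      also have "\<dots> = \<bar>F x y\<bar> / l ^ a + \<bar>G x y\<bar> / l ^ b"
        using \<open>l > 0\<close> by (simp add: l(2,3) F_hom G_hom abs_mult power_abs)
      also have "\<dots> \<le> 1 / l + 1 / l"
      proof (intro add_mono)
        show "\<bar>F x y\<bar> / l ^ a \<le> 1 / l"
          using that(1) \<open>l > 1\<close> \<open>a > 0\<close> by (intro frac_le) (auto simp: self_le_power)
        show "\<bar>G x y\<bar> / l ^ b \<le> 1 / l"
          using that(2) \<open>l > 1\<close> \<open>b > 0\<close> by (intro frac_le) (auto simp: self_le_power)
      qed
      finally show False using \<open>c * l > 2\<close> \<open>l > 0\<close> by (simp add: field_simps)
    qed
    moreover have "\<bar>u\<bar> \<le> 1" "\<bar>v\<bar> \<le> 1"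
      using uv by (auto simp: unit_sup_sphere_def max_def split: if_splits)
    then have "\<bar>x\<bar> \<le> l ^ \<tau>" "\<bar>y\<bar> \<le> l"
      using l by (simp_all add: abs_mult mult_left_le)
    moreover have "l ^ \<tau> \<le> L ^ \<tau>" using \<open>l \<le> L\<close> \<open>l > 0\<close> by (intro power_mono) auto
    ultimately show ?thesis by (simp add: abs_le_iff)
  qed (simp add: L_def)
  have "{(x, y). \<bar>F x y\<bar> \<le> 1 \<and> \<bar>G x y\<bar> \<le> 1} \<subseteq> cbox (- (L ^ \<tau>), - L) (L ^ \<tau>, L)"
    using sublevel_in_box by (auto simp: cbox_Pair_eq)
  then show ?thesis using bounded_cbox bounded_subset by blast
qed

lemma measure_lborel_scale_axes:
  fixes \<alpha> \<beta> :: real and S :: "(real \<times> real) set"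
  assumes "\<alpha> > 0" "\<beta> > 0" "S \<in> sets borel"
  shows "measure lborel S = \<alpha> * \<beta> * measure lborel ((\<lambda>(x, y). (\<alpha> * x, \<beta> * y)) -` S)"
proof -
  define c where "c j = (if j = (1, 0) then \<alpha> else \<beta>)" for j :: "real \<times> real"
  define T where "T p = 0 + (\<Sum>j\<in>Basis. (c j * (p \<bullet> j)) *\<^sub>R j)" for p :: "real \<times> real"
  have Basis: "(Basis :: (real \<times> real) set) = {(1, 0), (0, 1)}" by (auto simp: Basis_prod_def)
  have T: "T = (\<lambda>(x, y). (\<alpha> * x, \<beta> * y))"
    unfolding T_def Basis c_def by (auto simp: fun_eq_iff)
  have "lborel = density (distr lborel borel T) (\<lambda>_. (\<Prod>j\<in>Basis. \<bar>c j\<bar>))"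
    unfolding T_def using assms(1,2) by (intro lborel_affine_euclidean) (auto simp: c_def)
  also have "(\<Prod>j\<in>Basis. \<bar>c j\<bar>) = \<alpha> * \<beta>" using assms(1,2) by (simp add: Basis c_def)
  finally have lborel_eq: "lborel = density (distr lborel borel T) (\<lambda>_. ennreal (\<alpha> * \<beta>))" .
  have "T \<in> borel_measurable borel"
    unfolding T case_prod_beta by (intro borel_measurable_continuous_onI continuous_intros)
  then have "emeasure lborel S = ennreal (\<alpha> * \<beta>) * emeasure lborel (T -` S)"
    using arg_cong[where f="\<lambda>M. emeasure M S", OF lborel_eq] assms(3)
    by (simp add: emeasure_density nn_integral_cmult_indicator emeasure_distr)
  then show ?thesis
    using assms(1,2) by (simp add: measure_def enn2real_mult T)
qed

lemma weighted_degree_conditions: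
  fixes \<upsilon> m \<tau> :: nat and f g :: "int poly"
  assumes "\<upsilon> \<in> {1, 2}" "\<tau> > 0" "m = 1 \<or> \<upsilon> * \<tau> = 1"
    and "max (real (degree f) / 2) (real (degree g) / 3) = 2 * real m / (real \<upsilon> * real \<tau>)"
  shows "\<tau> * degree f \<le> 2 * varsigma \<upsilon> m" "\<tau> * degree g \<le> 3 * varsigma \<upsilon> m"
    and "\<tau> * degree f = 2 * varsigma \<upsilon> m \<or> \<tau> * degree g = 3 * varsigma \<upsilon> m"
proof -
  define s where "s = varsigma \<upsilon> m"
  have "max (real (degree f) / 2) (real (degree g) / 3) = real s / real \<tau>"
    using assms by (auto simp: s_def varsigma_def)
  then have le: "real (degree f) / 2 \<le> real s / real \<tau>" "real (degree g) / 3 \<le> real s / real \<tau>"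
    and eq: "real (degree f) / 2 = real s / real \<tau> \<or> real (degree g) / 3 = real s / real \<tau>"
    by (auto simp: max_def split: if_splits)
  have "real (\<tau> * degree f) \<le> real (2 * s)" "real (\<tau> * degree g) \<le> real (3 * s)"
    using le assms(2) by (simp_all add: field_simps)
  then show "\<tau> * degree f \<le> 2 * s" "\<tau> * degree g \<le> 3 * s" by (simp_all only: of_nat_le_iff)
  have "real (\<tau> * degree f) = real (2 * s) \<or> real (\<tau> * degree g) = real (3 * s)"
    using eq assms(2) by (auto simp: field_simps)
  then show "\<tau> * degree f = 2 * s \<or> \<tau> * degree g = 3 * s" by (simp only: of_nat_eq_iff)
qed

lemma bounded_diagonal_image_coordinates:
  fixes S :: "(real \<times> real) set"
  assumes "bounded S"
  obtains C where "\<And>a b x y. a \<ge> 0 \<Longrightarrow> b \<ge> 0 \<Longrightarrow> (x, y) \<in> (\<lambda>(x, y). (a * x, b * y)) ` S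
    \<Longrightarrow> \<bar>x\<bar> \<le> C * a \<and> \<bar>y\<bar> \<le> C * b"
proof -
  obtain C where C: "\<And>p. p \<in> S \<Longrightarrow> norm p \<le> C" using assms unfolding bounded_iff by blast
  have "\<bar>x\<bar> \<le> C * a \<and> \<bar>y\<bar> \<le> C * b"
    if "a \<ge> 0" "b \<ge> 0" "(x, y) \<in> (\<lambda>(x, y). (a * x, b * y)) ` S" for a b x y
  proof -
    from that(3) obtain x' y' where "(x', y') \<in> S" and xy: "x = a * x'" "y = b * y'" by auto
    then have "\<bar>x'\<bar> \<le> C" "\<bar>y'\<bar> \<le> C"
      using C norm_fst_le[of x' y'] norm_snd_le[of y' x'] by fastforce+
    then have "a * \<bar>x'\<bar> \<le> a * C" "b * \<bar>y'\<bar> \<le> b * C"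
      using that(1,2) by (simp_all add: mult_left_mono)
    then show ?thesis unfolding xy using that(1,2) by (simp add: abs_mult mult.commute)
  qed
  then show ?thesis using that by blast
qed

definition region_scaling :: "nat \<Rightarrow> nat \<Rightarrow> real \<Rightarrow> real \<times> real \<Rightarrow> real \<times> real" where
  "region_scaling \<tau> s N = (\<lambda>(x, y). (N powr (\<tau> / (6 * s)) * x, N powr (1 / (6 * s)) * y))"

lemma surj_region_scaling:
  assumes "N > 0"
  shows "surj (region_scaling \<tau> s N)"
proof (rule surjI)
  fix p :: "real \<times> real"
  show "region_scaling \<tau> s N (fst p / N powr (\<tau> / (6 * s)), snd p / N powr (1 / (6 * s))) = p"
    using assms by (simp add: region_scaling_def)
qed

lemma regionR_scaling_iff:
  assumes "\<tau> * degree f \<le> 2 * varsigma \<upsilon> m" "\<tau> * degree g \<le> 3 * varsigma \<upsilon> m"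
    and "varsigma \<upsilon> m > 0" "N > 0"
  shows "region_scaling \<tau> (varsigma \<upsilon> m) N p \<in> regionR f g \<upsilon> m \<tau> N \<longleftrightarrow> p \<in> regionR f g \<upsilon> m \<tau> 1"
proof -
  define s where "s = varsigma \<upsilon> m"
  define l where "l = N powr (1 / (6 * real s))"
  have "N powr (\<tau> / (6 * real s)) = l ^ \<tau>"
    using assms(4) by (simp add: l_def powr_power)
  then have scaling: "region_scaling \<tau> s N (x, y) = (l ^ \<tau> * x, l * y)" for x y
    by (simp add: region_scaling_def l_def)
  have "l ^ (2 * s) = N powr (1 / 3)" "l ^ (3 * s) = N powr (1 / 2)"
    using assms(3,4) by (simp_all add: l_def s_def powr_power)
  then have A: "formA f \<upsilon> m \<tau> (l ^ \<tau> * x) (l * y) = N powr (1 / 3) * formA f \<upsilon> m \<tau> x y"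
    and B: "formB g \<upsilon> m \<tau> (l ^ \<tau> * x) (l * y) = N powr (1 / 2) * formB g \<upsilon> m \<tau> x y" for x y
    using assms(1,2) by (simp_all add: formA_def formB_def homog_scale s_def)
  have "(N / 4) powr (1 / 3) = N powr (1 / 3) * (1 / 4) powr (1 / 3)"
    "(N / 27) powr (1 / 2) = N powr (1 / 2) * (1 / 27) powr (1 / 2)"
    using assms(4) by (simp_all add: powr_divide)
  then show ?thesis
    using assms(4) by (cases p) (simp add: regionR_def s_def [symmetric] scaling A B abs_mult)
qed

lemma regionR_eq_image:
  assumes "\<tau> * degree f \<le> 2 * varsigma \<upsilon> m" "\<tau> * degree g \<le> 3 * varsigma \<upsilon> m"
    and "varsigma \<upsilon> m > 0" "N > 0"
  shows "regionR f g \<upsilon> m \<tau> N = region_scaling \<tau> (varsigma \<upsilon> m) N ` regionR f g \<upsilon> m \<tau> 1"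
proof
  show "region_scaling \<tau> (varsigma \<upsilon> m) N ` regionR f g \<upsilon> m \<tau> 1 \<subseteq> regionR f g \<upsilon> m \<tau> N"
    using regionR_scaling_iff[OF assms] by blast
  show "regionR f g \<upsilon> m \<tau> N \<subseteq> region_scaling \<tau> (varsigma \<upsilon> m) N ` regionR f g \<upsilon> m \<tau> 1"
  proof
    fix q assume q: "q \<in> regionR f g \<upsilon> m \<tau> N"
    obtain p where p: "q = region_scaling \<tau> (varsigma \<upsilon> m) N p"
      using surj_region_scaling[OF assms(4)] by (metis surjD)
    with q have "p \<in> regionR f g \<upsilon> m \<tau> 1" using regionR_scaling_iff[OF assms] by simp
    with p show "q \<in> region_scaling \<tau> (varsigma \<upsilon> m) N ` regionR f g \<upsilon> m \<tau> 1" by blast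
  qed
qed

lemma closed_regionR: "closed (regionR f g \<upsilon> m \<tau> N)"
proof -
  have "continuous_on UNIV (\<lambda>p. formA f \<upsilon> m \<tau> (fst p) (snd p))"
    "continuous_on UNIV (\<lambda>p. formB g \<upsilon> m \<tau> (fst p) (snd p))"
    using continuous_on_homog by (simp_all add: formA_def formB_def case_prod_beta')
  then show ?thesis
    unfolding regionR_def case_prod_beta'
    by (intro closed_Collect_conj closed_Collect_le continuous_intros) auto
qed

lemma measure_regionR:
  assumes "\<tau> * degree f \<le> 2 * varsigma \<upsilon> m" "\<tau> * degree g \<le> 3 * varsigma \<upsilon> m"
    and "varsigma \<upsilon> m > 0" "N > 0"
  shows "measure lborel (regionR f g \<upsilon> m \<tau> N)
    = N powr (real (\<tau> + 1) / (6 * real (varsigma \<upsilon> m))) * measure lborel (regionR f g \<upsilon> m \<tau> 1)"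
proof -
  define s where "s = varsigma \<upsilon> m"
  have "regionR f g \<upsilon> m \<tau> N \<in> sets borel" using closed_regionR by (rule borel_closed)
  then have "measure lborel (regionR f g \<upsilon> m \<tau> N) = N powr (\<tau> / (6 * real s)) * N powr (1 / (6 * real s))
      * measure lborel (region_scaling \<tau> s N -` regionR f g \<upsilon> m \<tau> N)"
    using assms(4) unfolding region_scaling_def by (intro measure_lborel_scale_axes) auto
  also have "region_scaling \<tau> s N -` regionR f g \<upsilon> m \<tau> N = regionR f g \<upsilon> m \<tau> 1"
    unfolding vimage_def s_def using regionR_scaling_iff[OF assms] by simp
  also have "N powr (\<tau> / (6 * real s)) * N powr (1 / (6 * real s)) = N powr (real (\<tau> + 1) / (6 * real s))"
    by (simp add: add_divide_distrib add.commute flip: powr_add)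
  finally show ?thesis unfolding s_def .
qed

lemma bounded_regionR:
  assumes "\<tau> > 0" "varsigma \<upsilon> m > 0"
    and "\<tau> * degree f \<le> 2 * varsigma \<upsilon> m" "\<tau> * degree g \<le> 3 * varsigma \<upsilon> m"
    and "\<tau> * degree f = 2 * varsigma \<upsilon> m \<or> \<tau> * degree g = 3 * varsigma \<upsilon> m"
    and "\<not> (\<exists>t. poly (map_poly of_int f) t = 0 \<and> poly (map_poly of_int g) t = (0::real))"
  shows "bounded (regionR f g \<upsilon> m \<tau> 1)"
proof -
  have "bounded {(x, y). \<bar>formA f \<upsilon> m \<tau> x y\<bar> \<le> 1 \<and> \<bar>formB g \<upsilon> m \<tau> x y\<bar> \<le> 1}"
  proof (rule bounded_weighted_homogeneous_sublevel)
    show "formA f \<upsilon> m \<tau> (l ^ \<tau> * x) (l * y) = l ^ (2 * varsigma \<upsilon> m) * formA f \<upsilon> m \<tau> x y"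
      and "formB g \<upsilon> m \<tau> (l ^ \<tau> * x) (l * y) = l ^ (3 * varsigma \<upsilon> m) * formB g \<upsilon> m \<tau> x y" for l x y
      using assms(3,4) by (simp_all add: formA_def formB_def homog_scale)
    have "2 * varsigma \<upsilon> m > 0" "3 * varsigma \<upsilon> m > 0" using assms(2) by simp_all
    then show "x = 0 \<and> y = 0" if "formA f \<upsilon> m \<tau> x y = 0" "formB g \<upsilon> m \<tau> x y = 0" for x y
      using homog_common_zero[OF assms(1) _ _ assms(3-6)] that unfolding formA_def formB_def by blast
  qed (use assms(1,2) continuous_on_homog in \<open>simp_all add: formA_def formB_def\<close>)
  moreover have "(1 / 4 :: real) powr (1 / 3) \<le> 1" "(1 / 27 :: real) powr (1 / 2) \<le> 1"
    by (simp_all add: powr_le1)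
  then have "regionR f g \<upsilon> m \<tau> 1
      \<subseteq> {(x, y). \<bar>formA f \<upsilon> m \<tau> x y\<bar> \<le> 1 \<and> \<bar>formB g \<upsilon> m \<tau> x y\<bar> \<le> 1}"
    by (auto simp: regionR_def)
  ultimately show ?thesis by (rule bounded_subset)
qed

theorem lemma2p3:
  fixes \<upsilon> m \<tau> :: nat and f g :: "int poly"
  assumes "\<upsilon> \<in> {1, 2}" and "m > 0" and "\<tau> > 0"
    and "m = 1 \<or> \<upsilon> * \<tau> = 1"
    and "4 * f ^ 3 + 27 * g ^ 2 \<noteq> 0"
    and "\<not> (\<exists>t::real. poly (map_poly of_int f) t = 0 \<and> poly (map_poly of_int g) t = 0)"
    and "max (real (degree f) / 2) (real (degree g) / 3) = 2 * real m / (real \<upsilon> * real \<tau>)"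
  defines "\<sigma> \<equiv> real (varsigma \<upsilon> m)"
  defines "R \<equiv> regionR f g \<upsilon> m \<tau>"
  defines "V \<equiv> measure lborel (R 1)"
  shows "(\<forall>N>0. R N = (\<lambda>(x, y). (N powr (\<tau> / (6 * \<sigma>)) * x, N powr (1 / (6 * \<sigma>)) * y)) ` R 1)
       \<and> bounded (R 1)
       \<and> (\<forall>N>0. measure lborel (R N) = N powr ((\<tau> + 1) / (6 * \<sigma>)) * V)
       \<and> (\<exists>C. \<forall>N>0. \<forall>(x, y)\<in>R N. \<bar>x\<bar> \<le> C * N powr (\<tau> / (6 * \<sigma>))
                                  \<and> \<bar>y\<bar> \<le> C * N powr (1 / (6 * \<sigma>)))"
proof -
  have s_pos: "varsigma \<upsilon> m > 0" using assms(1,2) by (auto simp: varsigma_def)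
  note deg = weighted_degree_conditions[OF assms(1,3,4,7)]
  have scaling: "(\<lambda>(x, y). (N powr (\<tau> / (6 * \<sigma>)) * x, N powr (1 / (6 * \<sigma>)) * y))
      = region_scaling \<tau> (varsigma \<upsilon> m) N" for N
    by (simp add: region_scaling_def \<sigma>_def)
  have image: "\<forall>N>0. R N = (\<lambda>(x, y). (N powr (\<tau> / (6 * \<sigma>)) * x, N powr (1 / (6 * \<sigma>)) * y)) ` R 1"
    unfolding scaling R_def using regionR_eq_image[OF deg(1,2) s_pos] by blast
  have bounded: "bounded (R 1)"
    unfolding R_def using bounded_regionR[OF assms(3) s_pos deg assms(6)] .
  then obtain C where C: "\<And>a b x y. a \<ge> 0 \<Longrightarrow> b \<ge> 0 \<Longrightarrow> (x, y) \<in> (\<lambda>(x, y). (a * x, b * y)) ` R 1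
      \<Longrightarrow> \<bar>x\<bar> \<le> C * a \<and> \<bar>y\<bar> \<le> C * b"
    using bounded_diagonal_image_coordinates[OF bounded] by blast
  have "\<bar>x\<bar> \<le> C * N powr (\<tau> / (6 * \<sigma>)) \<and> \<bar>y\<bar> \<le> C * N powr (1 / (6 * \<sigma>))"
    if "N > 0" "(x, y) \<in> R N" for N x y
  proof (rule C)
    show "(x, y) \<in> (\<lambda>(x, y). (N powr (\<tau> / (6 * \<sigma>)) * x, N powr (1 / (6 * \<sigma>)) * y)) ` R 1"
      using image that by blast
  qed simp_all
  then have "\<forall>N>0. \<forall>(x, y)\<in>R N. \<bar>x\<bar> \<le> C * N powr (\<tau> / (6 * \<sigma>)) \<and> \<bar>y\<bar> \<le> C * N powr (1 / (6 * \<sigma>))"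
    by blast
  moreover have "\<forall>N>0. measure lborel (R N) = N powr ((\<tau> + 1) / (6 * \<sigma>)) * V"
    unfolding R_def V_def \<sigma>_def using measure_regionR[OF deg(1,2) s_pos] by blast
  ultimately show ?thesis using image bounded by blast
qed

end
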